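(* Let $\nu\in\mathcal P_{2,0}(\mathbb R^d)$ and $1\le m\le d$. Let $V_m$ be the set of $m$-dimensional linear subspaces of $\mathbb R^d$ and $\mathcal D_m=\{\mu\in\mathcal P_{2,0}(\mathbb R^d):\mu(E)=1\text{ for some }E\in V_m\}$. Then every maximizer of $\operatorname{Var}(\mu)$ over $\{\mu\in\mathcal D_m:\mu\preceq_K\nu\}$ is of the form $(p_E)_\#\nu$ for some $E\in V_m$, where $p_E$ is the orthogonal projection onto $E$.
   Context: $\mathcal P_{2,0}(\mathbb R^d)$: Borel probability measures with finite second moment and zero mean. $\operatorname{Var}(\mu)=\int|x-\int z\,d\mu|^2d\mu$. Kantorovich dominance: $\mu\preceq_K\nu$ iff there is a coupling $\pi$ of $\mu,\nu$ with $\int\langle x-b_\nu,y-x\rangle\,d\pi=0$, $b_\nu=\int y\,d\nu$. *)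

theory Defs
  imports "HOL-Probability.Probability"
begin

definition P20 :: "'a::euclidean_space measure \<Rightarrow> bool" where
  "P20 \<mu> \<longleftrightarrow> prob_space \<mu> \<and> sets \<mu> = sets borel
     \<and> integrable \<mu> (\<lambda>x. (norm x)\<^sup>2) \<and> integral\<^sup>L \<mu> (\<lambda>x. x) = 0"

definition bary :: "'a::euclidean_space measure \<Rightarrow> 'a" where
  "bary \<mu> = integral\<^sup>L \<mu> (\<lambda>x. x)"

definition Var :: "'a::euclidean_space measure \<Rightarrow> real" where
  "Var \<mu> = integral\<^sup>L \<mu> (\<lambda>x. (norm (x - bary \<mu>))\<^sup>2)"

definition coupling :: "('a::euclidean_space \<times> 'a) measure \<Rightarrow> 'a measure \<Rightarrow> 'a measure \<Rightarrow> bool" where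
  "coupling \<pi> \<mu> \<nu> \<longleftrightarrow> prob_space \<pi> \<and> sets \<pi> = sets (borel \<Otimes>\<^sub>M borel)
     \<and> distr \<pi> borel fst = \<mu> \<and> distr \<pi> borel snd = \<nu>"

definition K_dom :: "'a::euclidean_space measure \<Rightarrow> 'a measure \<Rightarrow> bool" where
  "K_dom \<mu> \<nu> \<longleftrightarrow> (\<exists>\<pi>. coupling \<pi> \<mu> \<nu>
     \<and> integrable \<pi> (\<lambda>(x, y). inner (x - bary \<nu>) (y - x))
     \<and> integral\<^sup>L \<pi> (\<lambda>(x, y). inner (x - bary \<nu>) (y - x)) = 0)"

definition Vsub :: "nat \<Rightarrow> 'a::euclidean_space set set" where
  "Vsub m = {E. subspace E \<and> dim E = m}"

definition Dm :: "nat \<Rightarrow> 'a::euclidean_space measure set" where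
  "Dm m = {\<mu>. P20 \<mu> \<and> (\<exists>E\<in>Vsub m. emeasure \<mu> E = 1)}"

definition proj :: "'a::euclidean_space set \<Rightarrow> 'a \<Rightarrow> 'a" where
  "proj E x = (THE y. y \<in> E \<and> (\<forall>z\<in>E. inner (x - y) z = 0))"

end

theory Submission
  imports Defs
begin

text \<open>
  Let mu be dominated by nu through a coupling pi and concentrated on a subspace E, with
  projection p. On the support of pi we have <x, y> = <x, p y>, so the dominance condition
  gives \<integral> <x, p y> d pi = Var mu, and expanding the square yields
  \<integral> |x - p y|^2 d pi = Var (p_# nu) - Var mu.
  The image p_# nu is itself a competitor: the graph coupling of p witnesses p_# nu \<preceq>_K nu
  because y - p y is orthogonal to E. Maximality of mu therefore forces x = p y pi-almost
  everywhere, i.e. mu = p_# nu.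
\<close>

lemma proj_eqI:
  fixes E :: "'a::euclidean_space set"
  assumes "subspace E" and "y \<in> E" and "\<And>z. z \<in> E \<Longrightarrow> inner (x - y) z = 0"
  shows "proj E x = y"
  unfolding proj_def
proof (rule the_equality)
  show "y \<in> E \<and> (\<forall>z\<in>E. inner (x - y) z = 0)" using assms by blast
next
  fix y' assume y': "y' \<in> E \<and> (\<forall>z\<in>E. inner (x - y') z = 0)"
  have "y' - y \<in> E" using y' assms(1,2) subspace_diff by blast
  then have "inner (y' - y) (y' - y) = inner (x - y) (y' - y) - inner (x - y') (y' - y)"
    by (simp add: inner_diff_left)
  also have "\<dots> = 0" using y' assms(3) \<open>y' - y \<in> E\<close> by simp
  finally show "y' = y" by simp
qed

lemma
  fixes E :: "'a::euclidean_space set"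
  assumes "subspace E"
  shows proj_in_subspace: "proj E x \<in> E"
    and proj_orthogonal: "z \<in> E \<Longrightarrow> inner (x - proj E x) z = 0"
proof -
  have "span E = E" using assms by (simp add: span_eq_iff)
  then obtain y w where "y \<in> E" and w: "\<And>z. z \<in> E \<Longrightarrow> inner w z = 0" and "x = y + w"
    using orthogonal_subspace_decomp_exists[of E x] unfolding orthogonal_def by metis
  moreover from this have "proj E x = y" using assms by (intro proj_eqI) simp_all
  ultimately show "proj E x \<in> E" and "z \<in> E \<Longrightarrow> inner (x - proj E x) z = 0"
    by simp_all
qed

lemma linear_proj:
  fixes E :: "'a::euclidean_space set"
  assumes "subspace E"
  shows "linear (proj E)"
proof (rule linearI)
  have orth: "inner (proj E x) z = inner x z" if "z \<in> E" for x z
    using proj_orthogonal[OF assms that, of x] by (simp add: inner_diff_left)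
  fix x y :: 'a and c :: real
  show "proj E (x + y) = proj E x + proj E y"
    using assms by (intro proj_eqI)
      (simp_all add: subspace_add proj_in_subspace orth inner_diff_left inner_add_left)
  show "proj E (c *\<^sub>R x) = c *\<^sub>R proj E x"
    using assms by (intro proj_eqI) (simp_all add: subspace_scale proj_in_subspace orth inner_diff_left)
qed

lemma borel_measurable_linear:
  fixes f :: "'a::euclidean_space \<Rightarrow> 'b::euclidean_space"
  assumes "linear f"
  shows "f \<in> borel_measurable borel"
  using assms by (intro borel_measurable_continuous_onI linear_continuous_on)
    (simp add: linear_conv_bounded_linear)

lemma P20_measurable: "P20 \<mu> \<Longrightarrow> measurable \<mu> N = measurable borel N"
  unfolding P20_def by (intro measurable_cong_sets) simp_all

lemma P20_integrable_id:
  assumes "P20 \<mu>"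
  shows "integrable \<mu> (\<lambda>x. x)"
proof (rule Bochner_Integration.integrable_bound)
  interpret prob_space \<mu> using assms by (simp add: P20_def)
  show "integrable \<mu> (\<lambda>x. 1 + (norm x)\<^sup>2)" using assms by (simp add: P20_def)
  show "(\<lambda>x. x) \<in> borel_measurable \<mu>" using assms by (simp add: P20_measurable)
  have "norm x \<le> 1 + (norm x)\<^sup>2" for x :: 'a
    using zero_le_power2[of "norm x - 1"] by (simp add: power2_diff) (smt (verit) norm_ge_zero)
  then show "AE x in \<mu>. norm x \<le> norm (1 + (norm x)\<^sup>2)" by simp
qed

lemma Var_P20: "P20 \<mu> \<Longrightarrow> Var \<mu> = integral\<^sup>L \<mu> (\<lambda>x. (norm x)\<^sup>2)"
  by (simp add: Var_def bary_def P20_def)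

lemma P20_distr_linear:
  fixes f :: "'a::euclidean_space \<Rightarrow> 'b::euclidean_space"
  assumes \<nu>: "P20 \<nu>" and f: "linear f"
  shows "P20 (distr \<nu> borel f)"
proof -
  interpret prob_space \<nu> using \<nu> by (simp add: P20_def)
  have blf: "bounded_linear f" using f linear_conv_bounded_linear by blast
  obtain K where K: "\<And>x. norm (f x) \<le> norm x * K" using bounded_linear.bounded[OF blf] by blast
  have [measurable]: "f \<in> borel_measurable borel" using f by (rule borel_measurable_linear)
  have fm: "f \<in> measurable \<nu> borel" using \<nu> by (simp add: P20_measurable)
  have "integrable \<nu> (\<lambda>x. (norm (f x))\<^sup>2)"
  proof (rule Bochner_Integration.integrable_bound)
    show "integrable \<nu> (\<lambda>x. K\<^sup>2 * (norm x)\<^sup>2)" using \<nu> by (simp add: P20_def)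
    show "(\<lambda>x. (norm (f x))\<^sup>2) \<in> borel_measurable \<nu>" using \<nu> by (simp add: P20_measurable)
    have "(norm (f x))\<^sup>2 \<le> K\<^sup>2 * (norm x)\<^sup>2" for x
      using power_mono[OF K norm_ge_zero[of "f x"], where n=2] by (simp add: power_mult_distrib mult.commute)
    then show "AE x in \<nu>. norm ((norm (f x))\<^sup>2) \<le> norm (K\<^sup>2 * (norm x)\<^sup>2)" by simp
  qed
  moreover have "integral\<^sup>L \<nu> f = 0"
    using integral_bounded_linear[OF blf P20_integrable_id[OF \<nu>]] \<nu> linear_0[OF f]
    by (simp add: P20_def)
  ultimately show ?thesis
    unfolding P20_def by (simp add: prob_space_distr fm integrable_distr_eq integral_distr)
qed

lemma K_dom_distr_proj:
  fixes E :: "'a::euclidean_space set"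
  assumes \<nu>: "P20 \<nu>" and E: "subspace E"
  shows "K_dom (distr \<nu> borel (proj E)) \<nu>"
proof -
  interpret prob_space \<nu> using \<nu> by (simp add: P20_def)
  have [measurable]: "proj E \<in> borel_measurable borel"
    using E by (intro borel_measurable_linear linear_proj)
  define \<pi> where "\<pi> = distr \<nu> (borel \<Otimes>\<^sub>M borel) (\<lambda>y. (proj E y, y))"
  have graph: "(\<lambda>y. (proj E y, y)) \<in> measurable \<nu> (borel \<Otimes>\<^sub>M borel)"
    using \<nu> by (simp add: P20_measurable)
  have "coupling \<pi> (distr \<nu> borel (proj E)) \<nu>"
    unfolding coupling_def \<pi>_def using \<nu>
    by (simp add: prob_space_distr graph distr_distr o_def distr_id2 P20_def)
  moreover
  have [measurable]: "(\<lambda>(x, y). inner (x - bary \<nu>) (y - x)) \<in> borel_measurable (borel \<Otimes>\<^sub>M borel)"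
    by measurable
  have "inner (proj E y - bary \<nu>) (y - proj E y) = 0" for y
    using \<nu> proj_orthogonal[OF E proj_in_subspace[OF E]]
    by (simp add: P20_def bary_def inner_commute)
  then have "integrable \<pi> (\<lambda>(x, y). inner (x - bary \<nu>) (y - x))"
    and "integral\<^sup>L \<pi> (\<lambda>(x, y). inner (x - bary \<nu>) (y - x)) = 0"
    unfolding \<pi>_def by (simp_all add: graph integrable_distr_eq integral_distr)
  ultimately show ?thesis unfolding K_dom_def by blast
qed

lemma distr_proj_in_Dm:
  assumes "P20 \<nu>" and "E \<in> Vsub m"
  shows "distr \<nu> borel (proj E) \<in> Dm m"
proof -
  have E: "subspace E" using assms(2) by (simp add: Vsub_def)
  interpret prob_space \<nu> using assms(1) by (simp add: P20_def)
  have "proj E \<in> measurable \<nu> borel"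
    using assms(1) E by (simp add: P20_measurable borel_measurable_linear linear_proj)
  moreover have "E \<in> sets borel" using closed_subspace[OF E] by simp
  ultimately have "emeasure (distr \<nu> borel (proj E)) E = 1"
    using proj_in_subspace[OF E] by (simp add: emeasure_distr emeasure_space_1 vimage_def)
  then show ?thesis
    using assms P20_distr_linear[OF assms(1) linear_proj[OF E]] unfolding Dm_def by blast
qed

lemma coupling_measurable:
  "coupling \<pi> \<mu> \<nu> \<Longrightarrow> measurable \<pi> N = measurable (borel \<Otimes>\<^sub>M borel) N"
  unfolding coupling_def by (intro measurable_cong_sets) simp_all

lemma
  fixes f :: "'a::euclidean_space \<Rightarrow> 'b::{banach, second_countable_topology}"
  assumes "coupling \<pi> \<mu> \<nu>" and [measurable]: "f \<in> borel_measurable borel"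
  shows integrable_coupling_fst_iff: "integrable \<pi> (\<lambda>z. f (fst z)) \<longleftrightarrow> integrable \<mu> f"
    and integral_coupling_fst: "integral\<^sup>L \<pi> (\<lambda>z. f (fst z)) = integral\<^sup>L \<mu> f"
    and integrable_coupling_snd_iff: "integrable \<pi> (\<lambda>z. f (snd z)) \<longleftrightarrow> integrable \<nu> f"
    and integral_coupling_snd: "integral\<^sup>L \<pi> (\<lambda>z. f (snd z)) = integral\<^sup>L \<nu> f"
proof -
  have [measurable]: "fst \<in> measurable \<pi> borel" "snd \<in> measurable \<pi> borel"
    by (simp_all add: coupling_measurable[OF assms(1)])
  from assms(1) have \<mu>: "\<mu> = distr \<pi> borel fst" and \<nu>: "\<nu> = distr \<pi> borel snd"
    unfolding coupling_def by simp_all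
  show "integrable \<pi> (\<lambda>z. f (fst z)) \<longleftrightarrow> integrable \<mu> f"
    and "integral\<^sup>L \<pi> (\<lambda>z. f (fst z)) = integral\<^sup>L \<mu> f"
    and "integrable \<pi> (\<lambda>z. f (snd z)) \<longleftrightarrow> integrable \<nu> f"
    and "integral\<^sup>L \<pi> (\<lambda>z. f (snd z)) = integral\<^sup>L \<nu> f"
    unfolding \<mu> \<nu> by (simp_all add: integrable_distr_eq integral_distr)
qed

lemma coupling_eq_distr_if_AE_graph:
  assumes c: "coupling \<pi> \<mu> \<nu>" and [measurable]: "f \<in> borel_measurable borel"
    and graph: "AE z in \<pi>. fst z = f (snd z)"
  shows "\<mu> = distr \<nu> borel f"
proof -
  have [measurable]: "fst \<in> measurable \<pi> borel" "snd \<in> measurable \<pi> borel"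
    by (simp_all add: coupling_measurable[OF c])
  from c have "\<mu> = distr \<pi> borel fst" and "\<nu> = distr \<pi> borel snd"
    unfolding coupling_def by simp_all
  moreover have "distr \<pi> borel fst = distr \<pi> borel (\<lambda>z. f (snd z))"
    by (rule distr_cong_AE[OF refl refl graph]) simp_all
  ultimately show ?thesis by (simp add: distr_distr o_def)
qed

lemma
  fixes \<pi> :: "('a::euclidean_space \<times> 'a) measure"
  assumes c: "coupling \<pi> \<mu> \<nu>" and \<mu>: "P20 \<mu>" and \<nu>: "P20 \<nu>"
    and K_int: "integrable \<pi> (\<lambda>(x, y). inner (x - bary \<nu>) (y - x))"
    and K_zero: "integral\<^sup>L \<pi> (\<lambda>(x, y). inner (x - bary \<nu>) (y - x)) = 0"
    and E: "subspace E" and \<mu>E: "emeasure \<mu> E = 1"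
  shows integrable_K_coupling_inner_proj: "integrable \<pi> (\<lambda>z. inner (fst z) (proj E (snd z)))"
    and integral_K_coupling_inner_proj: "integral\<^sup>L \<pi> (\<lambda>z. inner (fst z) (proj E (snd z))) = Var \<mu>"
proof -
  interpret \<mu>: prob_space \<mu> using \<mu> by (simp add: P20_def)
  have [measurable]: "proj E \<in> borel_measurable borel"
    using E by (intro borel_measurable_linear linear_proj)
  have [measurable]: "fst \<in> measurable \<pi> borel" "snd \<in> measurable \<pi> borel"
    "(\<lambda>(x, y). inner (x - bary \<nu>) (y - x)) \<in> borel_measurable \<pi>"
    by (simp_all add: coupling_measurable[OF c])
  have "E \<in> sets borel" using closed_subspace[OF E] by simp
  have "AE x in \<mu>. x \<in> E" using \<mu>E by (intro \<mu>.AE_prob_1) (simp add: measure_def)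
  then have "AE z in \<pi>. fst z \<in> E"
    using c \<open>E \<in> sets borel\<close> unfolding coupling_def by (auto simp: AE_distr_iff)
  then have AE_eq: "AE z in \<pi>. (\<lambda>(x, y). inner (x - bary \<nu>) (y - x)) z + (norm (fst z))\<^sup>2
      = inner (fst z) (proj E (snd z))"
  proof eventually_elim
    case (elim z)
    have "inner (fst z) (snd z - proj E (snd z)) = 0"
      using proj_orthogonal[OF E elim] by (simp add: inner_commute)
    then show ?case using \<nu>
      by (simp add: P20_def bary_def case_prod_unfold inner_diff_right power2_norm_eq_inner)
  qed
  have sq: "integrable \<pi> (\<lambda>z. (norm (fst z))\<^sup>2)" "integral\<^sup>L \<pi> (\<lambda>z. (norm (fst z))\<^sup>2) = Var \<mu>"
    using \<mu> integrable_coupling_fst_iff[OF c, of "\<lambda>x. (norm x)\<^sup>2"]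
      integral_coupling_fst[OF c, of "\<lambda>x. (norm x)\<^sup>2"] by (simp_all add: P20_def Var_P20)
  show "integrable \<pi> (\<lambda>z. inner (fst z) (proj E (snd z)))"
    by (rule integrable_cong_AE_imp[OF _ _ AE_eq]) (simp_all add: K_int sq)
  have "Var \<mu> = integral\<^sup>L \<pi> (\<lambda>z. (\<lambda>(x, y). inner (x - bary \<nu>) (y - x)) z + (norm (fst z))\<^sup>2)"
    using K_int K_zero sq by simp
  also have "\<dots> = integral\<^sup>L \<pi> (\<lambda>z. inner (fst z) (proj E (snd z)))"
    by (rule integral_cong_AE[OF _ _ AE_eq]) simp_all
  finally show "integral\<^sup>L \<pi> (\<lambda>z. inner (fst z) (proj E (snd z))) = Var \<mu>" ..
qed

lemma
  fixes \<pi> :: "('a::euclidean_space \<times> 'a) measure"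
  assumes c: "coupling \<pi> \<mu> \<nu>" and \<mu>: "P20 \<mu>" and \<nu>: "P20 \<nu>"
    and K_int: "integrable \<pi> (\<lambda>(x, y). inner (x - bary \<nu>) (y - x))"
    and K_zero: "integral\<^sup>L \<pi> (\<lambda>(x, y). inner (x - bary \<nu>) (y - x)) = 0"
    and E: "subspace E" and \<mu>E: "emeasure \<mu> E = 1"
  shows integrable_K_coupling_dist_proj: "integrable \<pi> (\<lambda>z. (norm (fst z - proj E (snd z)))\<^sup>2)"
    and integral_K_coupling_dist_proj:
      "integral\<^sup>L \<pi> (\<lambda>z. (norm (fst z - proj E (snd z)))\<^sup>2) = Var (distr \<nu> borel (proj E)) - Var \<mu>"
proof -
  note cross = integrable_K_coupling_inner_proj[OF assms] integral_K_coupling_inner_proj[OF assms]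
  have [measurable]: "proj E \<in> borel_measurable borel"
    using E by (intro borel_measurable_linear linear_proj)
  have "proj E \<in> measurable \<nu> borel" using \<nu> by (simp add: P20_measurable)
  moreover have "P20 (distr \<nu> borel (proj E))" using P20_distr_linear[OF \<nu> linear_proj[OF E]] .
  ultimately have "integrable \<nu> (\<lambda>y. (norm (proj E y))\<^sup>2)"
    and "integral\<^sup>L \<nu> (\<lambda>y. (norm (proj E y))\<^sup>2) = Var (distr \<nu> borel (proj E))"
    by (simp_all add: P20_def Var_P20 integrable_distr_eq integral_distr)
  then have sq_snd: "integrable \<pi> (\<lambda>z. (norm (proj E (snd z)))\<^sup>2)"
    "integral\<^sup>L \<pi> (\<lambda>z. (norm (proj E (snd z)))\<^sup>2) = Var (distr \<nu> borel (proj E))"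
    using integrable_coupling_snd_iff[OF c, of "\<lambda>y. (norm (proj E y))\<^sup>2"]
      integral_coupling_snd[OF c, of "\<lambda>y. (norm (proj E y))\<^sup>2"] by simp_all
  have sq_fst: "integrable \<pi> (\<lambda>z. (norm (fst z))\<^sup>2)" "integral\<^sup>L \<pi> (\<lambda>z. (norm (fst z))\<^sup>2) = Var \<mu>"
    using \<mu> integrable_coupling_fst_iff[OF c, of "\<lambda>x. (norm x)\<^sup>2"]
      integral_coupling_fst[OF c, of "\<lambda>x. (norm x)\<^sup>2"] by (simp_all add: P20_def Var_P20)
  have expand: "(norm (a - b))\<^sup>2 = (norm a)\<^sup>2 - 2 * inner a b + (norm b)\<^sup>2" for a b :: 'a
    by (simp add: power2_norm_eq_inner inner_diff_left inner_diff_right inner_commute)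
  show "integrable \<pi> (\<lambda>z. (norm (fst z - proj E (snd z)))\<^sup>2)"
    unfolding expand using sq_fst sq_snd cross by simp
  show "integral\<^sup>L \<pi> (\<lambda>z. (norm (fst z - proj E (snd z)))\<^sup>2) = Var (distr \<nu> borel (proj E)) - Var \<mu>"
    unfolding expand using sq_fst sq_snd cross by simp
qed

lemma K_dom_eq_distr_proj_if_Var_le:
  fixes \<mu> \<nu> :: "'a::euclidean_space measure"
  assumes \<mu>: "P20 \<mu>" and \<nu>: "P20 \<nu>" and "K_dom \<mu> \<nu>"
    and E: "subspace E" and \<mu>E: "emeasure \<mu> E = 1"
    and Var_le: "Var (distr \<nu> borel (proj E)) \<le> Var \<mu>"
  shows "\<mu> = distr \<nu> borel (proj E)"
proof -
  obtain \<pi> where c: "coupling \<pi> \<mu> \<nu>"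
    and K_int: "integrable \<pi> (\<lambda>(x, y). inner (x - bary \<nu>) (y - x))"
    and K_zero: "integral\<^sup>L \<pi> (\<lambda>(x, y). inner (x - bary \<nu>) (y - x)) = 0"
    using \<open>K_dom \<mu> \<nu>\<close> unfolding K_dom_def by blast
  note dist = integrable_K_coupling_dist_proj[OF c \<mu> \<nu> K_int K_zero E \<mu>E]
    integral_K_coupling_dist_proj[OF c \<mu> \<nu> K_int K_zero E \<mu>E]
  have "0 \<le> integral\<^sup>L \<pi> (\<lambda>z. (norm (fst z - proj E (snd z)))\<^sup>2)"
    by (rule integral_nonneg_AE) simp
  then have "integral\<^sup>L \<pi> (\<lambda>z. (norm (fst z - proj E (snd z)))\<^sup>2) = 0"
    using dist(2) Var_le by linarith
  then have "AE z in \<pi>. (norm (fst z - proj E (snd z)))\<^sup>2 = 0"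
    using integral_nonneg_eq_0_iff_AE[OF dist(1)] by simp
  then have "AE z in \<pi>. fst z = proj E (snd z)" by eventually_elim simp
  then show ?thesis
    using c E by (intro coupling_eq_distr_if_AE_graph borel_measurable_linear linear_proj)
qed

theorem mainTheorem16:
  fixes \<nu> \<mu> :: "'a::euclidean_space measure" and m :: nat
  assumes "P20 \<nu>"
    and "1 \<le> m" and "m \<le> DIM('a)"
    and "\<mu> \<in> Dm m" and "K_dom \<mu> \<nu>"
    and "\<forall>\<mu>'\<in>Dm m. K_dom \<mu>' \<nu> \<longrightarrow> Var \<mu>' \<le> Var \<mu>"
  shows "\<exists>E\<in>Vsub m. \<mu> = distr \<nu> borel (proj E)"
proof -
  \<comment> \<open>The bounds on m only make V_m nonempty.\<close>
  from assms(4) obtain E where E: "E \<in> Vsub m" and "P20 \<mu>" and "emeasure \<mu> E = 1"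
    unfolding Dm_def by blast
  have "subspace E" using E by (simp add: Vsub_def)
  have "Var (distr \<nu> borel (proj E)) \<le> Var \<mu>"
    using assms(6) distr_proj_in_Dm[OF assms(1) E] K_dom_distr_proj[OF assms(1) \<open>subspace E\<close>]
    by blast
  then have "\<mu> = distr \<nu> borel (proj E)"
    using K_dom_eq_distr_proj_if_Var_le \<open>P20 \<mu>\<close> assms(1,5) \<open>subspace E\<close> \<open>emeasure \<mu> E = 1\<close>
    by blast
  with E show ?thesis by blast
qed

end
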